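(* Let $\mathbf{A}(i)$ for all $i=1,\ldots,k$ be conforming block triangular matrices over an idempotent semifield (e.g. max-plus algebra) given by \[ \mathbf{A}(i)=\mathbf{D}(i)\oplus\mathbf{T}(i),\quad \mathbf{D}(i)=\begin{pmatrix}\mathbf{D}_{1}(i) & \mathbf{0}\\ \mathbf{0} & \mathbf{D}_{2}(i)\end{pmatrix},\quad \mathbf{T}(i)=\begin{pmatrix}\mathbf{0} & \mathbf{T}_{12}(i)\\ \mathbf{0} & \mathbf{0}\end{pmatrix}. \] Let $\mathbf{A}_{k}=\mathbf{A}(1)\cdots\mathbf{A}(k)$, $\mathbf{D}_{j}(l,m)=\bigotimes_{i=l}^{m}\mathbf{D}_{j}(i)$ and $\mathbf{D}_{jk}=\mathbf{D}_{j}(1,k)$ for $j=1,2$, with empty products equal to the identity matrix $\mathbf{I}$. Then the following double-inequality holds: \[ \|\mathbf{D}_{1k}\|\oplus\|\mathbf{D}_{2k}\| \leq \|\mathbf{A}_{k}\| \leq \|\mathbf{D}_{1k}\|\oplus\|\mathbf{D}_{2k}\| \oplus \bigoplus_{j=1}^{k}\|\mathbf{T}(j)\| \bigoplus_{i=1}^{k}\|\mathbf{D}_{1}(1,i-1)\|\,\|\mathbf{D}_{2}(i+1,k)\|. \]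
   Context: Work in an idempotent semifield $(\mathbb{X},\oplus,\otimes,\mathbb{0},\mathbb{1})$ (e.g. max-plus algebra with $\oplus=\max$, $\otimes=+$, $\mathbb{0}=-\infty$, $\mathbb{1}=0$), totally ordered by $x\leq y\iff x\oplus y=y$; matrix operations are defined componentwise as usual with $\oplus$ and $\otimes$ (multiplication sign omitted). $\mathbf{0}$ denotes a zero matrix (all entries $\mathbb{0}$), $\mathbf{I}$ the identity matrix. The tropical norm of a matrix is $\|\mathbf{A}\|=\bigoplus_{i,j}a_{ij}$ (the maximum entry in max-plus algebra), satisfying $\|\mathbf{A}\oplus\mathbf{B}\|=\|\mathbf{A}\|\oplus\|\mathbf{B}\|$, $\|\mathbf{A}\mathbf{C}\|\leq\|\mathbf{A}\|\|\mathbf{C}\|$, $\|x\mathbf{A}\|=x\|\mathbf{A}\|$. *)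

theory Defs
  imports "HOL-Analysis.Finite_Cartesian_Product"
begin

class idem_semifield = comm_semiring_1 + inverse + linorder +
  assumes add_idem: "x + x = x"
  assumes mult_inverse: "x \<noteq> 0 \<Longrightarrow> x * inverse x = 1"
  assumes less_eq_iff_add: "x \<le> y \<longleftrightarrow> x + y = y"

definition tnorm :: "'a::idem_semifield ^'c::finite ^'r::finite \<Rightarrow> 'a" where
  "tnorm M = (\<Sum>i\<in>UNIV. \<Sum>j\<in>UNIV. M $ i $ j)"

text \<open>Ordered product f(l) f(l+1) ... f(m); identity if l > m.\<close>
definition mprod :: "(nat \<Rightarrow> 'a::semiring_1 ^'n::finite ^'n) \<Rightarrow> nat \<Rightarrow> nat \<Rightarrow> 'a ^'n ^'n" where
  "mprod f l m = foldr (\<lambda>i acc. f i ** acc) [l..<Suc m] (mat 1)"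

definition block :: "'a::zero ^'n ^'n \<Rightarrow> 'a ^'m ^'n \<Rightarrow> 'a ^'n ^'m \<Rightarrow> 'a ^'m ^'m
    \<Rightarrow> 'a ^('n + 'm) ^('n + 'm)" where
  "block B11 B12 B21 B22 = (\<chi> i j. (case i of
      Inl a \<Rightarrow> (case j of Inl b \<Rightarrow> B11 $ a $ b | Inr b \<Rightarrow> B12 $ a $ b)
    | Inr a \<Rightarrow> (case j of Inl b \<Rightarrow> B21 $ a $ b | Inr b \<Rightarrow> B22 $ a $ b)))"

end

theory Submission
  imports Defs
begin

text \<open>A product of block upper triangular matrices is again block upper triangular: its diagonal
  blocks are the products \<open>D\<^sub>1(1,k)\<close>, \<open>D\<^sub>2(1,k)\<close> of the diagonal blocks, and its
  off-diagonal block is \<open>\<Sum>\<^sub>i D\<^sub>1(1,i-1) T\<^sub>1\<^sub>2(i) D\<^sub>2(i+1,k)\<close>, obtained by choosing the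
  factor \<open>T\<^sub>1\<^sub>2(i)\<close> exactly once. The tropical norm of a block matrix is the idempotent sum,
  i.e. the maximum, of the norms of its blocks. This gives the lower bound at once, and the
  upper bound follows by estimating each summand of the off-diagonal block with
  submultiplicativity of the norm.\<close>

context idem_semifield
begin

subclass canonically_ordered_monoid_add
proof
  fix a b :: 'a
  show "a \<le> b \<longleftrightarrow> (\<exists>c. b = a + c)"
  proof
    assume "a \<le> b"
    then show "\<exists>c. b = a + c" by (metis less_eq_iff_add)
  next
    assume "\<exists>c. b = a + c"
    then obtain c where "b = a + c" by blast
    then show "a \<le> b" by (simp add: less_eq_iff_add add.assoc[symmetric] add_idem)
  qed
qed

subclass ordered_comm_semiring
proof
  fix a b c :: 'a
  assume "a \<le> b" "0 \<le> c"
  then have "c * a + c * b = c * b" by (metis less_eq_iff_add distrib_left)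
  then show "c * a \<le> c * b" by (simp add: less_eq_iff_add)
qed

lemma idem_add_le: "x \<le> z \<Longrightarrow> y \<le> z \<Longrightarrow> x + y \<le> z"
  by (metis add.assoc less_eq_iff_add)

lemma idem_sum_le: "finite S \<Longrightarrow> (\<And>i. i \<in> S \<Longrightarrow> f i \<le> c) \<Longrightarrow> sum f S \<le> c"
  by (induction S rule: finite_induct) (auto intro: idem_add_le)

end

lemma mprod_empty: "m < l \<Longrightarrow> mprod f l m = mat 1"
  by (simp add: mprod_def)

lemma mprod_Suc:
  assumes "l \<le> Suc m"
  shows "mprod f l (Suc m) = mprod f l m ** f (Suc m)"
proof -
  let ?step = "\<lambda>i acc. f i ** acc"
  have foldr_mult: "foldr ?step xs (B ** C) = foldr ?step xs B ** C" for xs B C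
    by (induction xs) (auto simp: matrix_mul_assoc)
  have "[l..<Suc (Suc m)] = [l..<Suc m] @ [Suc m]" using assms by simp
  then have "mprod f l (Suc m) = foldr ?step [l..<Suc m] (mat 1 ** f (Suc m))"
    by (simp add: mprod_def del: upt_Suc)
  then show ?thesis by (simp only: foldr_mult mprod_def)
qed

lemma matrix_add_rdistrib: "(B + C) ** (A::'a::semiring_1^_^_) = B ** A + C ** A"
  by (vector matrix_matrix_mult_def sum.distrib[symmetric] field_simps)

lemma matrix_sum_rdistrib:
  "finite S \<Longrightarrow> (\<Sum>i\<in>S. P i) ** (A::'a::semiring_1^_^_) = (\<Sum>i\<in>S. P i ** A)"
  by (induction S rule: finite_induct) (auto simp: matrix_add_rdistrib)

lemma sum_UNIV_Plus:
  "(\<Sum>x\<in>(UNIV::('n::finite + 'm::finite) set). f x)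
     = (\<Sum>x\<in>UNIV. f (Inl x)) + (\<Sum>x\<in>UNIV. f (Inr x))"
  by (simp flip: UNIV_Plus_UNIV add: sum.Plus comp_def)

lemma block_add:
  "block a b c d + block a' b' c' d' = block (a + a') (b + b') (c + c') (d + d')"
  unfolding block_def by (auto simp: vec_eq_iff split: sum.splits)

lemma block_mat_1: "(mat 1 :: 'a::semiring_1^_^_) = block (mat 1) 0 0 (mat 1)"
  unfolding block_def mat_def by (auto simp: vec_eq_iff split: sum.splits)

lemma block_upper_mult:
  "block a b 0 d ** block a' b' 0 d' = block (a ** a') (a ** b' + b ** d') 0 (d ** d')"
proof -
  have "(block a b 0 d ** block a' b' 0 d') $ i $ j
      = block (a ** a') (a ** b' + b ** d') 0 (d ** d') $ i $ j" for i j
    unfolding block_def matrix_matrix_mult_def vec_lambda_beta sum_UNIV_Plus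
    by (cases i; cases j) (simp_all add: sum.distrib)
  then show ?thesis by (simp add: vec_eq_iff)
qed

lemma mprod_block_upper:
  "mprod (\<lambda>i. block (B11 i) (B12 i) 0 (B22 i)) 1 k
     = block (mprod B11 1 k)
             (\<Sum>i\<in>{1..k}. mprod B11 1 (i - 1) ** B12 i ** mprod B22 (i + 1) k)
             0 (mprod B22 1 k)"
proof (induction k)
  case 0
  show ?case by (simp add: mprod_empty flip: block_mat_1)
next
  case (Suc k)
  let ?X = "\<lambda>k. \<Sum>i\<in>{1..k}. mprod B11 1 (i - 1) ** B12 i ** mprod B22 (i + 1) k"
  have "?X k ** B22 (Suc k)
      = (\<Sum>i\<in>{1..k}. mprod B11 1 (i - 1) ** B12 i ** mprod B22 (i + 1) (Suc k))"
    by (simp add: matrix_sum_rdistrib mprod_Suc matrix_mul_assoc)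
  then have X_Suc: "?X (Suc k) = mprod B11 1 k ** B12 (Suc k) + ?X k ** B22 (Suc k)"
    by (simp add: mprod_empty add.commute)
  have "mprod (\<lambda>i. block (B11 i) (B12 i) 0 (B22 i)) 1 (Suc k)
      = block (mprod B11 1 k) (?X k) 0 (mprod B22 1 k)
        ** block (B11 (Suc k)) (B12 (Suc k)) 0 (B22 (Suc k))"
    by (simp only: mprod_Suc[of 1] Suc.IH)
  also have "\<dots> = block (mprod B11 1 (Suc k)) (?X (Suc k)) 0 (mprod B22 1 (Suc k))"
    by (simp only: block_upper_mult X_Suc mprod_Suc[of 1])
  finally show ?case .
qed

lemma tnorm_zero: "tnorm (0::'a::idem_semifield^_^_) = 0"
  by (simp add: tnorm_def)

lemma tnorm_add: "tnorm (M + N) = tnorm M + tnorm N"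
  by (simp add: tnorm_def sum.distrib)

lemma tnorm_sum: "finite S \<Longrightarrow> tnorm (\<Sum>i\<in>S. M i) = (\<Sum>i\<in>S. tnorm (M i))"
  by (induction S rule: finite_induct) (auto simp: tnorm_add tnorm_zero)

lemma tnorm_block: "tnorm (block a b c d) = tnorm a + tnorm b + tnorm c + tnorm d"
  unfolding tnorm_def block_def by (simp add: sum_UNIV_Plus sum.distrib ac_simps)

lemma entry_le_tnorm: "M $ i $ j \<le> tnorm M"
proof -
  have "M $ i $ j \<le> (\<Sum>j\<in>UNIV. M $ i $ j)" by (rule member_le_sum) auto
  also have "\<dots> \<le> (\<Sum>i\<in>UNIV. \<Sum>j\<in>UNIV. M $ i $ j)"
    by (rule member_le_sum[where f = "\<lambda>i. \<Sum>j\<in>UNIV. M $ i $ j"]) auto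
  finally show ?thesis unfolding tnorm_def .
qed

lemma tnorm_mult: "tnorm (M ** N) \<le> tnorm M * tnorm N"
proof -
  have "(M ** N) $ i $ j \<le> tnorm M * tnorm N" for i j
    unfolding matrix_matrix_mult_def vec_lambda_beta
    by (auto intro!: idem_sum_le mult_mono entry_le_tnorm)
  then show ?thesis unfolding tnorm_def[of "M ** N"] by (auto intro!: idem_sum_le)
qed

lemma tnorm_sum_mult3_le:
  fixes L :: "'i \<Rightarrow> 'a::idem_semifield^'n::finite^'r::finite"
  assumes "finite S"
  shows "tnorm (\<Sum>i\<in>S. L i ** M i ** R i)
           \<le> (\<Sum>i\<in>S. tnorm (M i)) * (\<Sum>i\<in>S. tnorm (L i) * tnorm (R i))"
proof -
  have "tnorm (L i ** M i ** R i) \<le> (\<Sum>i\<in>S. tnorm (M i)) * (\<Sum>i\<in>S. tnorm (L i) * tnorm (R i))"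
    if i: "i \<in> S" for i
  proof -
    have "tnorm (L i ** M i ** R i) \<le> tnorm (L i) * tnorm (M i) * tnorm (R i)"
      by (meson order.trans tnorm_mult mult_right_mono zero_le)
    also have "\<dots> = tnorm (M i) * (tnorm (L i) * tnorm (R i))"
      by (simp add: ac_simps)
    also have "\<dots> \<le> (\<Sum>i\<in>S. tnorm (M i)) * (\<Sum>i\<in>S. tnorm (L i) * tnorm (R i))"
      using assms i by (intro mult_mono member_le_sum) auto
    finally show ?thesis .
  qed
  then show ?thesis using assms by (simp add: tnorm_sum idem_sum_le)
qed

theorem proposition1:
  fixes D1 :: "nat \<Rightarrow> 'a::idem_semifield ^'n::finite ^'n"
    and D2 :: "nat \<Rightarrow> 'a ^'m::finite ^'m"
    and T12 :: "nat \<Rightarrow> 'a ^'m ^'n"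
    and k :: nat
  defines "D \<equiv> \<lambda>i. block (D1 i) 0 0 (D2 i)"
    and "T \<equiv> \<lambda>i. block 0 (T12 i) 0 0"
  defines "A \<equiv> \<lambda>i. D i + T i"
  shows "tnorm (mprod D1 1 k) + tnorm (mprod D2 1 k) \<le> tnorm (mprod A 1 k)
     \<and> tnorm (mprod A 1 k) \<le> tnorm (mprod D1 1 k) + tnorm (mprod D2 1 k)
          + (\<Sum>j\<in>{1..k}. tnorm (T j))
            * (\<Sum>i\<in>{1..k}. tnorm (mprod D1 1 (i - 1)) * tnorm (mprod D2 (i + 1) k))"
proof -
  let ?X = "\<Sum>i\<in>{1..k}. mprod D1 1 (i - 1) ** T12 i ** mprod D2 (i + 1) k"
  have A_block: "A = (\<lambda>i. block (D1 i) (T12 i) 0 (D2 i))"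
    unfolding A_def D_def T_def block_add by simp
  have norm_A: "tnorm (mprod A 1 k) = tnorm (mprod D1 1 k) + tnorm (mprod D2 1 k) + tnorm ?X"
    unfolding A_block mprod_block_upper tnorm_block by (simp add: tnorm_zero ac_simps)
  have "tnorm (T j) = tnorm (T12 j)" for j
    unfolding T_def by (simp add: tnorm_block tnorm_zero)
  then have "tnorm ?X \<le> (\<Sum>j\<in>{1..k}. tnorm (T j))
            * (\<Sum>i\<in>{1..k}. tnorm (mprod D1 1 (i - 1)) * tnorm (mprod D2 (i + 1) k))"
    using tnorm_sum_mult3_le[of "{1..k}"] by simp
  then show ?thesis
    unfolding norm_A using add_left_mono le_iff_add by blast
qed

end
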